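(* Let $A$ be a nonempty finite set of $n$ alternatives and let $C$ be a capacity-wise lexicographic choice rule on $A$ with associated lists $\pi_q=(\succ^q_1,\dots,\succ^q_q)$, $q\in\{1,\dots,n\}$. If for each $q\in\{2,\dots,n\}$ the list $\pi_q$ is obtained by insertion from $\pi_{q-1}$, then $C$ satisfies monotonicity, i.e. $C(S,q)\subseteq C(S,q+1)$ for all nonempty $S\subseteq A$ and $q\in\{1,\dots,n-1\}$.
   Context: A choice rule assigns to each pair $(S,q)$, $S$ a nonempty subset of $A$ and $q\in\{1,\dots,n\}$, a nonempty $C(S,q)\subseteq S$ with $|C(S,q)|\le q$. A priority ordering is a complete, transitive, antisymmetric relation on $A$. $C$ is capacity-wise lexicographic with lists $\pi_q=(\succ^q_1,\dots,\succ^q_q)$ of priority orderings if for each $(S,q)$, $C(S,q)$ is obtained by choosing the $\succ^q_1$-highest element of $S$, then the $\succ^q_2$-highest among the remaining, and so on, until $q$ are chosen or none is left. A list $\pi'=(\succ'_1,\dots,\succ'_{q+1})$ is obtained by insertion from $\pi=(\succ_1,\dots,\succ_q)$ if there is $k\in\{1,\dots,q+1\}$ with $\succ'_l=\succ_l$ for all $l<k$ and $\succ'_l=\succ_{l-1}$ for all $l>k$. *)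

theory Defs
  imports Main
begin

text \<open>A priority ordering on A: a complete, transitive, antisymmetric relation on A
 (as a set of pairs; (x,y) \<in> r means x is weakly ranked above y).\<close>
definition priority_ordering :: "'a set \<Rightarrow> 'a rel \<Rightarrow> bool" where
  "priority_ordering A r \<longleftrightarrow> r \<subseteq> A \<times> A \<and>
     (\<forall>x\<in>A. \<forall>y\<in>A. (x,y) \<in> r \<or> (y,x) \<in> r) \<and>
     (\<forall>x y z. (x,y) \<in> r \<longrightarrow> (y,z) \<in> r \<longrightarrow> (x,z) \<in> r) \<and>
     (\<forall>x y. (x,y) \<in> r \<longrightarrow> (y,x) \<in> r \<longrightarrow> x = y)"

definition top_elem :: "'a rel \<Rightarrow> 'a set \<Rightarrow> 'a" where
  "top_elem r S = (THE x. x \<in> S \<and> (\<forall>y\<in>S. (x,y) \<in> r))"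

fun lex_choice :: "'a rel list \<Rightarrow> 'a set \<Rightarrow> 'a set" where
  "lex_choice [] S = {}"
| "lex_choice (r # rs) S =
     (if S = {} then {} else insert (top_elem r S) (lex_choice rs (S - {top_elem r S})))"

definition choice_rule :: "'a set \<Rightarrow> ('a set \<Rightarrow> nat \<Rightarrow> 'a set) \<Rightarrow> bool" where
  "choice_rule A C \<longleftrightarrow> (\<forall>S q. S \<noteq> {} \<and> S \<subseteq> A \<and> 1 \<le> q \<and> q \<le> card A \<longrightarrow>
       C S q \<noteq> {} \<and> C S q \<subseteq> S \<and> card (C S q) \<le> q)"

definition capacity_lexicographic ::
  "'a set \<Rightarrow> ('a set \<Rightarrow> nat \<Rightarrow> 'a set) \<Rightarrow> (nat \<Rightarrow> 'a rel list) \<Rightarrow> bool" where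
  "capacity_lexicographic A C \<pi> \<longleftrightarrow>
     (\<forall>q\<in>{1..card A}. length (\<pi> q) = q \<and> (\<forall>r\<in>set (\<pi> q). priority_ordering A r) \<and>
        (\<forall>S. S \<noteq> {} \<and> S \<subseteq> A \<longrightarrow> C S q = lex_choice (\<pi> q) S))"

text \<open>\<pi>' (length q+1) is obtained by insertion from \<pi> (length q), with 1-based indices
 (element l of a list xs is xs ! (l-1)).\<close>
definition obtained_by_insertion :: "'b list \<Rightarrow> 'b list \<Rightarrow> bool" where
  "obtained_by_insertion \<pi>' \<pi> \<longleftrightarrow> length \<pi>' = length \<pi> + 1 \<and>
     (\<exists>k\<in>{1..length \<pi> + 1}.
        (\<forall>l\<in>{1..length \<pi> + 1}. l < k \<longrightarrow> \<pi>' ! (l - 1) = \<pi> ! (l - 1)) \<and>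
        (\<forall>l\<in>{1..length \<pi> + 1}. l > k \<longrightarrow> \<pi>' ! (l - 1) = \<pi> ! (l - 2)))"

end

theory Submission
  imports Defs
begin

text \<open>Lexicographic choice can only grow when one more ordering is inserted anywhere into the
 list. Positions before the insertion point make the same choices, so it suffices to insert at
 the front. There the new ordering picks some element \<open>t\<close> of the menu \<open>T\<close>, and the key
 observation is that removing a single element \<open>x\<close> from a menu can only take \<open>x\<close> itself out of
 the chosen set: \<open>lex_choice rs T \<subseteq> insert x (lex_choice rs (T - {x}))\<close>.\<close>

lemma priority_ordering_total:
  "priority_ordering A r \<Longrightarrow> x \<in> A \<Longrightarrow> y \<in> A \<Longrightarrow> (x, y) \<in> r \<or> (y, x) \<in> r"
  unfolding priority_ordering_def by simp

lemma priority_ordering_trans: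
  "priority_ordering A r \<Longrightarrow> (x, y) \<in> r \<Longrightarrow> (y, z) \<in> r \<Longrightarrow> (x, z) \<in> r"
  unfolding priority_ordering_def by blast

lemma priority_ordering_antisym:
  "priority_ordering A r \<Longrightarrow> (x, y) \<in> r \<Longrightarrow> (y, x) \<in> r \<Longrightarrow> x = y"
  unfolding priority_ordering_def by blast

lemma priority_ordering_has_top:
  assumes r: "priority_ordering A r" and "finite T" "T \<subseteq> A" "T \<noteq> {}"
  shows "\<exists>t\<in>T. \<forall>y\<in>T. (t, y) \<in> r"
  using assms(2,4,3)
proof (induction T rule: finite_ne_induct)
  case (singleton x)
  then show ?case using priority_ordering_total[OF r, of x x] by simp
next
  case (insert a F)
  then obtain t where t: "t \<in> F" "\<forall>y\<in>F. (t, y) \<in> r" by auto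
  have "(a, a) \<in> r" "(t, a) \<in> r \<or> (a, t) \<in> r"
    using priority_ordering_total[OF r] insert.prems t(1) by auto
  then show ?case
    using t priority_ordering_trans[OF r, of a t] by blast
qed

lemma top_elem_eqI:
  assumes "priority_ordering A r" "t \<in> T" "\<forall>y\<in>T. (t, y) \<in> r"
  shows "top_elem r T = t"
  unfolding top_elem_def
  using assms priority_ordering_antisym[OF assms(1)] by (intro the_equality) auto

lemma lex_choice_empty [simp]: "lex_choice rs {} = {}"
  by (cases rs) auto

lemma lex_choice_Cons_top:
  assumes "priority_ordering A r" "t \<in> T" "\<forall>y\<in>T. (t, y) \<in> r"
  shows "lex_choice (r # rs) T = insert t (lex_choice rs (T - {t}))"
  using assms top_elem_eqI[OF assms] by auto

lemma lex_choice_subset_insert_Diff: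
  assumes "\<forall>r\<in>set rs. priority_ordering A r" "finite T" "T \<subseteq> A"
  shows "lex_choice rs T \<subseteq> insert x (lex_choice rs (T - {x}))"
  using assms
proof (induction rs arbitrary: T x)
  case Nil
  then show ?case by simp
next
  case (Cons r rs)
  have r: "priority_ordering A r" and rs: "\<forall>r\<in>set rs. priority_ordering A r"
    using Cons.prems(1) by auto
  have has_top: "\<exists>t\<in>U. \<forall>y\<in>U. (t, y) \<in> r" if "U \<subseteq> T" "U \<noteq> {}" for U
    using priority_ordering_has_top[OF r] rev_finite_subset[OF Cons.prems(2) that(1)] that Cons.prems(3)
    by blast
  show ?case
  proof (cases "T = {}")
    case False
    then obtain t where t: "t \<in> T" "\<forall>y\<in>T. (t, y) \<in> r"
      using has_top by blast
    have choice_T: "lex_choice (r # rs) T = insert t (lex_choice rs (T - {t}))"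
      using lex_choice_Cons_top[OF r t] .
    show ?thesis
    proof (cases "t = x")
      case True
      have "lex_choice rs (T - {x}) \<subseteq> lex_choice (r # rs) (T - {x})"
      proof (cases "T - {x} = {}")
        case False
        then obtain y where y: "y \<in> T - {x}" "\<forall>z\<in>T - {x}. (y, z) \<in> r"
          using has_top[of "T - {x}"] by blast
        show ?thesis
          unfolding lex_choice_Cons_top[OF r y]
          using Cons.IH[OF rs, of "T - {x}" y] Cons.prems(2,3) by auto
      qed (metis empty_subsetI lex_choice_empty)
      then show ?thesis
        unfolding choice_T True by blast
    next
      case False
      then have "lex_choice (r # rs) (T - {x}) = insert t (lex_choice rs (T - {x} - {t}))"
        using t by (intro lex_choice_Cons_top[OF r]) auto
      moreover have "lex_choice rs (T - {t}) \<subseteq> insert x (lex_choice rs (T - {t} - {x}))"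
        using Cons.IH[OF rs] Cons.prems(2,3) by auto
      moreover have "T - {t} - {x} = T - {x} - {t}"
        by blast
      ultimately show ?thesis
        using choice_T by auto
    qed
  qed simp
qed

lemma lex_choice_mono_insert_ordering:
  assumes "\<forall>r\<in>set ys. priority_ordering A r" "finite T" "T \<subseteq> A"
  shows "lex_choice (xs @ ys) T \<subseteq> lex_choice (xs @ r # ys) T"
  using assms
proof (induction xs arbitrary: T)
  case Nil
  show ?case
    using lex_choice_subset_insert_Diff[OF Nil.prems, of "top_elem r T"] by auto
next
  case (Cons r' xs)
  then have "lex_choice (xs @ ys) (T - {top_elem r' T}) \<subseteq>
             lex_choice (xs @ r # ys) (T - {top_elem r' T})"
    by auto
  then show ?case by auto
qed

lemma obtained_by_insertionE:
  assumes "obtained_by_insertion p' p"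
  obtains k r where "k \<le> length p" "p' = take k p @ r # drop k p"
proof -
  obtain k where k: "k \<in> {1..length p + 1}"
    and before: "\<forall>l\<in>{1..length p + 1}. l < k \<longrightarrow> p' ! (l - 1) = p ! (l - 1)"
    and after: "\<forall>l\<in>{1..length p + 1}. l > k \<longrightarrow> p' ! (l - 1) = p ! (l - 2)"
    and len: "length p' = length p + 1"
    using assms unfolding obtained_by_insertion_def by blast
  have "p' = take (k - 1) p @ p' ! (k - 1) # drop (k - 1) p"
  proof (rule nth_equalityI)
    show "length p' = length (take (k - 1) p @ p' ! (k - 1) # drop (k - 1) p)"
      using k len by auto
  next
    fix i assume i: "i < length p'"
    consider "i < k - 1" | "i = k - 1" | "i > k - 1" by linarith
    then show "p' ! i = (take (k - 1) p @ p' ! (k - 1) # drop (k - 1) p) ! i"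
    proof cases
      case 1
      then show ?thesis using before[rule_format, of "i + 1"] i len k by (auto simp: nth_append)
    next
      case 2
      then show ?thesis using k by (auto simp: nth_append)
    next
      case 3
      then show ?thesis using after[rule_format, of "i + 1"] i len k by (auto simp: nth_append)
    qed
  qed
  then show thesis
    using k by (intro that[of "k - 1"]) auto
qed

theorem lemma2:
  fixes A :: "'a set" and C :: "'a set \<Rightarrow> nat \<Rightarrow> 'a set" and \<pi> :: "nat \<Rightarrow> 'a rel list"
  assumes "finite A" and "A \<noteq> {}"
    and "choice_rule A C"
    and "capacity_lexicographic A C \<pi>"
    and "\<forall>q\<in>{2..card A}. obtained_by_insertion (\<pi> q) (\<pi> (q - 1))"
  shows "\<forall>S q. S \<noteq> {} \<and> S \<subseteq> A \<and> 1 \<le> q \<and> q \<le> card A - 1 \<longrightarrow> C S q \<subseteq> C S (q + 1)"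
proof (intro allI impI)
  fix S q assume Sq: "S \<noteq> {} \<and> S \<subseteq> A \<and> 1 \<le> q \<and> q \<le> card A - 1"
  then have "q \<in> {1..card A}" "q + 1 \<in> {1..card A}" by auto
  then have orderings: "\<forall>r\<in>set (\<pi> q). priority_ordering A r"
    and C_lex: "C S q = lex_choice (\<pi> q) S" "C S (q + 1) = lex_choice (\<pi> (q + 1)) S"
    using assms(4) Sq unfolding capacity_lexicographic_def by blast+
  have "q + 1 \<in> {2..card A}"
    using Sq by auto
  then have "obtained_by_insertion (\<pi> (q + 1)) (\<pi> q)"
    using assms(5) by (metis add_diff_cancel_right')
  then obtain k r where \<pi>_Suc: "\<pi> (q + 1) = take k (\<pi> q) @ r # drop k (\<pi> q)"
    by (rule obtained_by_insertionE)
  have "lex_choice (take k (\<pi> q) @ drop k (\<pi> q)) S \<subseteq> lex_choice (\<pi> (q + 1)) S"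
    unfolding \<pi>_Suc using orderings Sq assms(1) finite_subset
    by (intro lex_choice_mono_insert_ordering[of _ A]) (auto dest: in_set_dropD)
  then show "C S q \<subseteq> C S (q + 1)"
    using C_lex by simp
qed

end
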